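(* For every integer $k\ge 2$ and every $\alpha>2/e$, there is no family of truthful direct-revelation mechanisms (one for each number of rounds $T$) for the $k$-bidder game that is $\alpha$-competitive against selling the business.
   Context: Multiple-bidder game: there are $k\ge 2$ bidders and $T$ rounds; in each round the seller has one divisible item. Bidder $i$ has value $v_{i,t}\in[0,1]$ for the round-$t$ item; values are arbitrary, unknown to the seller, and each bidder knows all of its own values. A type profile is $\mathbf v=(v_{i,t})$; write $|\mathbf v_i|=\sum_t v_{i,t}$. A direct-revelation mechanism specifies, for each profile $\mathbf v$, allocation fractions $r_{\mathbf v,i,t}\in[0,1]$ with $\sum_i r_{\mathbf v,i,t}\le1$, prices $x_{\mathbf v,i,t}$ and end-of-game reimbursements $g_{\mathbf v,i}$; bidders report types, in round $t$ a non-eliminated bidder $i$ gets fraction $r_{\mathbf v,i,t}$ and must pay $x_{\mathbf v,i,t}$ (else it is eliminated forever), and at the end each non-eliminated bidder gets $g_{\mathbf v,i}$. Truthful means: $x_{\mathbf v,i,t}\le r_{\mathbf v,i,t}v_{i,t}$ for all $\mathbf v,i,t$; and for every $\mathbf v$, bidder $i$, profile $\mathbf v'$ differing from $\mathbf v$ only in bidder $i$'s type, and $\tau\le T$ with $x_{\mathbf v',i,t}\le r_{\mathbf v',i,t}v_{i,t}$ for all $t\le\tau$: $\sum_{t=1}^T(r_{\mathbf v,i,t}v_{i,t}-x_{\mathbf v,i,t})+g_{\mathbf v,i}\ge\sum_{t=1}^\tau(r_{\mathbf v',i,t}v_{i,t}-x_{\mathbf v',i,t})+x_{\mathbf v',i,\tau}$.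 Revenue ${\sf Rev}(\mathbf v)=\sum_{i,t}x_{\mathbf v,i,t}-\sum_i g_{\mathbf v,i}$; ${\sf Rev}_{STB}(\mathbf v)$ is the second largest of $|\mathbf v_1|,\dots,|\mathbf v_k|$. A family of mechanisms is $\alpha$-competitive against selling the business if there is $C$ depending only on $k$ with ${\sf Rev}(\mathbf v)\ge\alpha{\sf Rev}_{STB}(\mathbf v)-C$ for all $T$ and $\mathbf v$. *)

theory Defs
  imports Complex_Main
begin

(* Bidders are indexed 0..<k, rounds are indexed 0..<T (round t+1 of the paper is index t).
   A type profile is v :: nat => nat => real with v i t the value of bidder i for round t. *)
type_synonym profile = "nat \<Rightarrow> nat \<Rightarrow> real"

definition valid_profile :: "nat \<Rightarrow> nat \<Rightarrow> profile \<Rightarrow> bool" where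
  "valid_profile k T v \<longleftrightarrow>
     (\<forall>i t. (i < k \<and> t < T \<longrightarrow> 0 \<le> v i t \<and> v i t \<le> 1) \<and>
            (\<not> (i < k \<and> t < T) \<longrightarrow> v i t = 0))"

definition differ_only_in :: "nat \<Rightarrow> profile \<Rightarrow> profile \<Rightarrow> bool" where
  "differ_only_in i v v' \<longleftrightarrow> (\<forall>j. j \<noteq> i \<longrightarrow> v' j = v j)"

(* A direct-revelation mechanism is given by allocation r, prices x and reimbursements g:
   r v i t, x v i t, g v i. *)
definition feasible_mech ::
  "nat \<Rightarrow> nat \<Rightarrow> (profile \<Rightarrow> nat \<Rightarrow> nat \<Rightarrow> real) \<Rightarrow> bool" where
  "feasible_mech k T r \<longleftrightarrow>
     (\<forall>v. valid_profile k T v \<longrightarrow>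
        (\<forall>t<T. (\<forall>i<k. 0 \<le> r v i t \<and> r v i t \<le> 1) \<and> (\<Sum>i<k. r v i t) \<le> 1))"

definition truthful ::
  "nat \<Rightarrow> nat \<Rightarrow> (profile \<Rightarrow> nat \<Rightarrow> nat \<Rightarrow> real) \<Rightarrow> (profile \<Rightarrow> nat \<Rightarrow> nat \<Rightarrow> real)
     \<Rightarrow> (profile \<Rightarrow> nat \<Rightarrow> real) \<Rightarrow> bool" where
  "truthful k T r x g \<longleftrightarrow>
     (\<forall>v. valid_profile k T v \<longrightarrow> (\<forall>i<k. \<forall>t<T. x v i t \<le> r v i t * v i t)) \<and>
     (\<forall>v v' i \<tau>. valid_profile k T v \<longrightarrow> valid_profile k T v' \<longrightarrow> i < k \<longrightarrow>
        differ_only_in i v v' \<longrightarrow> \<tau> < T \<longrightarrow>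
        (\<forall>t\<le>\<tau>. x v' i t \<le> r v' i t * v i t) \<longrightarrow>
        (\<Sum>t<T. r v i t * v i t - x v i t) + g v i
          \<ge> (\<Sum>t\<le>\<tau>. r v' i t * v i t - x v' i t) + x v' i \<tau>)"

definition revenue ::
  "nat \<Rightarrow> nat \<Rightarrow> (profile \<Rightarrow> nat \<Rightarrow> nat \<Rightarrow> real) \<Rightarrow> (profile \<Rightarrow> nat \<Rightarrow> real) \<Rightarrow> profile \<Rightarrow> real" where
  "revenue k T x g v = (\<Sum>i<k. \<Sum>t<T. x v i t) - (\<Sum>i<k. g v i)"

definition total_value :: "nat \<Rightarrow> profile \<Rightarrow> nat \<Rightarrow> real" where
  "total_value T v i = (\<Sum>t<T. v i t)"

definition rev_STB :: "nat \<Rightarrow> nat \<Rightarrow> profile \<Rightarrow> real" where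
  "rev_STB k T v = rev (sort (map (total_value T v) [0..<k])) ! 1"

definition competitive ::
  "nat \<Rightarrow> real \<Rightarrow> (nat \<Rightarrow> profile \<Rightarrow> nat \<Rightarrow> nat \<Rightarrow> real) \<Rightarrow> (nat \<Rightarrow> profile \<Rightarrow> nat \<Rightarrow> nat \<Rightarrow> real)
     \<Rightarrow> (nat \<Rightarrow> profile \<Rightarrow> nat \<Rightarrow> real) \<Rightarrow> bool" where
  "competitive k \<alpha> R X G \<longleftrightarrow>
     (\<exists>C. \<forall>T v. valid_profile k T v \<longrightarrow>
        revenue k T (X T) (G T) v \<ge> \<alpha> * rev_STB k T v - C)"

end

(*
  Give a bidder the type whose value in round t is 1/(a + D - t) on the window a <= t < a + D
  and 0 elsewhere; every such type has total value H_D. If two bidders have window types and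
  all others value nothing, selling the business earns H_D.

  Fix one bidder and the K types a < K. Type a - d may imitate type a until its own window
  closes; with z the number of rounds left in the window of a and r(z) the allocation of a, this
  gains sum_z r(z) (1/(z - d) - 1/z), which truthfulness bounds by the utility of a - d.
  Averaging these constraints with weights l_d of total at most 1 and summing over the types
  bounds the revenue from the bidder by D H_D + K sum_z max(0, residual_l(z)). The weights
  l_d = 1/(d H_d) for z0 <= d < D, with H_(z0-1) close to H_D / e, have total weight at most
  ln(H_(D-1) / H_(z0-1)) <= 1, and their residuals sum to H_D / e + O(1). Averaging over the
  K^2 two-bidder profiles with K = m D gives a profile of revenue (2/m + 2/e) H_D + O(1),
  which is below alpha H_D - C once m and D are large.
*)

theory Submission
  imports Defs "HOL-Analysis.Harmonic_Numbers" "HOL-Library.Multiset"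
begin

definition residual :: "(nat \<Rightarrow> real) \<Rightarrow> nat \<Rightarrow> real" where
  "residual l z = 1 / real z - (\<Sum>d<z. l d * (1 / real (z - d) - 1 / real z))"

definition harmonic_weight :: "nat \<Rightarrow> nat \<Rightarrow> nat \<Rightarrow> real" where
  "harmonic_weight z0 D d = (if z0 \<le> d \<and> d < D then 1 / (real d * harm d) else 0)"

lemma harm_Suc_divide: "harm (Suc n) = harm n + 1 / real (Suc n)"
  by (simp add: harm_Suc inverse_eq_divide)

lemma harm_diff_le: "m \<le> n \<Longrightarrow> harm n - harm m \<le> real (n - m) / real (Suc m)"
proof (induction n rule: dec_induct)
  case (step n)
  have "1 / real (Suc n) \<le> 1 / real (Suc m)"
    using step.hyps by (intro divide_left_mono) auto
  then have "harm (Suc n) - harm m \<le> (real (n - m) + 1) / real (Suc m)"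
    using step.IH by (simp add: harm_Suc_divide add_divide_distrib)
  also have "real (n - m) + 1 = real (Suc n - m)"
    using step.hyps by (simp add: Suc_diff_le)
  finally show ?case .
qed simp

lemma inverse_mult_harm_le_ln_harm_diff:
  assumes "2 \<le> d"
  shows "1 / (real d * harm d) \<le> ln (harm d :: real) - ln (harm (d - 1))"
proof -
  have pos: "0 < (harm (d - 1) :: real)" "0 < (harm d :: real)"
    using assms by auto
  have harm_d: "harm d = harm (d - 1) + 1 / real d"
    using assms harm_Suc_divide[of "d - 1"] by simp
  have "ln (harm (d - 1) / harm d) \<le> harm (d - 1) / harm d - (1 :: real)"
    using pos by (intro ln_le_minus_one) simp
  also have "\<dots> = (harm (d - 1) - harm d) / harm d"
    using pos(2) by (simp add: diff_divide_distrib del: harm_pos_iff)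
  also have "\<dots> = - (1 / (real d * harm d))"
    using harm_d by simp
  finally show ?thesis
    unfolding ln_divide_pos[OF pos] by linarith
qed

lemma sum_harmonic_weight_le_1:
  assumes "2 \<le> z0" "z0 \<le> D" "harm (D - 1) \<le> exp 1 * (harm (z0 - 1) :: real)"
  shows "(\<Sum>d<D. harmonic_weight z0 D d) \<le> 1"
proof -
  have pos: "0 < (harm (z0 - 1) :: real)" "0 < (harm (D - 1) :: real)"
    using assms by auto
  have "(\<Sum>d<D. harmonic_weight z0 D d) = (\<Sum>d\<in>{z0..<D}. 1 / (real d * harm d))"
    unfolding harmonic_weight_def by (rule sum.mono_neutral_cong_right) auto
  also have "\<dots> \<le> (\<Sum>d\<in>{z0..<D}. ln (harm d :: real) - ln (harm (d - 1)))"
    using assms by (intro sum_mono inverse_mult_harm_le_ln_harm_diff) auto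
  also have "\<dots> = ln (harm (D - 1) :: real) - ln (harm (z0 - 1))"
    using sum_Suc_diff'[OF assms(2), of "\<lambda>n. ln (harm (n - 1))"] by simp
  also have "ln (harm (D - 1) :: real) \<le> ln (exp 1 * harm (z0 - 1) :: real)"
    using pos assms(3) by simp
  also have "\<dots> = 1 + ln (harm (z0 - 1))"
    using ln_mult_pos[OF exp_gt_zero pos(1), of 1] by simp
  finally show ?thesis by simp
qed

lemma residual_harmonic_weight_below:
  "z \<le> z0 \<Longrightarrow> residual (harmonic_weight z0 D) z = 1 / real z"
  by (simp add: residual_def harmonic_weight_def)

lemma sum_inverse_diff_eq_harm: "z0 \<le> z \<Longrightarrow> (\<Sum>d\<in>{z0..<z}. 1 / real (z - d)) = harm (z - z0)"
  unfolding harm_def inverse_eq_divide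
  by (rule sum.reindex_bij_witness[of _ "\<lambda>i. z - i" "\<lambda>d. z - d"]) auto

lemma residual_harmonic_weight_above:
  assumes "2 \<le> z0" "z0 \<le> z" "z \<le> D"
  shows "residual (harmonic_weight z0 D) z \<le> (harm z - harm (z - z0)) / (real z * harm z)"
proof -
  have Hz: "0 < (harm z :: real)"
    using assms by simp
  have "harm (z - z0) / (real z * harm z) = (\<Sum>d\<in>{z0..<z}. 1 / (harm z * real z * real (z - d)))"
    by (simp add: sum_inverse_diff_eq_harm[OF assms(2), symmetric] sum_divide_distrib mult_ac)
  also have "\<dots> \<le> (\<Sum>d\<in>{z0..<z}. 1 / (harm d * real z * real (z - d)))"
    using assms by (intro sum_mono divide_left_mono mult_right_mono harm_mono mult_pos_pos) auto
  also have "\<dots> = (\<Sum>d<z. harmonic_weight z0 D d * (1 / real (z - d) - 1 / real z))"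
  proof (rule sum.mono_neutral_cong_left)
    fix d assume "d \<in> {z0..<z}"
    then have "0 < d" "d < D" "0 < (harm d :: real)"
      using assms by auto
    then show "1 / (harm d * real z * real (z - d)) = harmonic_weight z0 D d * (1 / real (z - d) - 1 / real z)"
      using \<open>d \<in> {z0..<z}\<close> by (simp add: harmonic_weight_def field_simps of_nat_diff)
  qed (auto simp: harmonic_weight_def)
  finally show ?thesis
    using Hz by (simp add: residual_def field_simps)
qed

lemma harm_diff_ratio_le:
  assumes "2 \<le> z0" "z0 \<le> z"
  shows "(harm z - harm (z - z0)) / (real z * harm z) \<le> 2 / harm z0 * (1 / real (z - z0 + 1) - 1 / real z)"
proof -
  have pos: "0 < (harm z0 :: real)" "0 < real z"
    using assms by auto
  have "(harm z - harm (z - z0)) / (real z * harm z) \<le> (harm z - harm (z - z0)) / (real z * harm z0)"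
    using assms pos harm_mono[of "z - z0" z] by (intro divide_left_mono mult_left_mono mult_pos_pos harm_mono) auto
  also have "\<dots> \<le> (real z0 / real (z - z0 + 1)) / (real z * harm z0)"
    using assms harm_diff_le[of "z - z0" z] by (intro divide_right_mono) (auto simp: harm_nonneg)
  also have "\<dots> = real z0 / (real (z - z0 + 1) * real z * harm z0)"
    by simp
  also have "\<dots> \<le> 2 * (real z0 - 1) / (real (z - z0 + 1) * real z * harm z0)"
    using assms by (intro divide_right_mono mult_nonneg_nonneg harm_nonneg) auto
  also have "\<dots> = 2 / harm z0 * (1 / real (z - z0 + 1) - 1 / real z)"
    using assms pos by (simp add: field_simps of_nat_diff)
  finally show ?thesis .
qed

lemma sum_shifted_inverse_diff:
  assumes "1 \<le> z0" "z0 \<le> n"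
  shows "(\<Sum>z\<in>{z0..n}. 1 / real (z - z0 + 1) - 1 / real z) = harm (z0 - 1) + harm (n - z0 + 1) - harm n"
  using assms(2)
proof (induction n rule: dec_induct)
  case base
  then show ?case
    using assms harm_Suc_divide[of "z0 - 1"] harm_Suc_divide[of 0] by (simp add: harm_def[of 0])
next
  case (step n)
  have "Suc n - z0 + 1 = Suc (n - z0 + 1)"
    using step.hyps by simp
  then show ?case
    using step by (simp add: harm_Suc_divide)
qed

lemma sum_residual_harmonic_weight_le:
  assumes "2 \<le> z0" "z0 \<le> D"
  shows "(\<Sum>z\<in>{1..D}. max 0 (residual (harmonic_weight z0 D) z)) \<le> harm (z0 - 1) + 2"
proof -
  let ?s = "\<lambda>z. max 0 (residual (harmonic_weight z0 D) z)"
  have H0: "0 < (harm z0 :: real)"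
    using assms by simp
  have "{1..D} = {1..z0 - 1} \<union> {z0..D}"
    using assms by auto
  then have "(\<Sum>z\<in>{1..D}. ?s z) = (\<Sum>z\<in>{1..z0 - 1}. ?s z) + (\<Sum>z\<in>{z0..D}. ?s z)"
    by (simp add: sum.union_disjoint)
  also have "(\<Sum>z\<in>{1..z0 - 1}. ?s z) = harm (z0 - 1)"
    unfolding harm_def inverse_eq_divide by (intro sum.cong) (auto simp: residual_harmonic_weight_below)
  also have "(\<Sum>z\<in>{z0..D}. ?s z) \<le> (\<Sum>z\<in>{z0..D}. 2 / harm z0 * (1 / real (z - z0 + 1) - 1 / real z))"
  proof (intro sum_mono max.boundedI)
    fix z assume z: "z \<in> {z0..D}"
    show "0 \<le> 2 / harm z0 * (1 / real (z - z0 + 1) - 1 / real z)"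
      using z assms by (intro mult_nonneg_nonneg divide_nonneg_nonneg harm_nonneg) (auto simp: frac_le)
    show "residual (harmonic_weight z0 D) z \<le> 2 / harm z0 * (1 / real (z - z0 + 1) - 1 / real z)"
      using z assms by (intro order_trans[OF residual_harmonic_weight_above harm_diff_ratio_le]) auto
  qed
  also have "\<dots> = 2 / harm z0 * (\<Sum>z\<in>{z0..D}. 1 / real (z - z0 + 1) - 1 / real z)"
    by (rule sum_distrib_left[symmetric])
  also have "\<dots> = 2 / harm z0 * (harm (z0 - 1) + harm (D - z0 + 1) - harm D)"
    using assms by (subst sum_shifted_inverse_diff) auto
  also have "\<dots> \<le> 2 / harm z0 * harm (z0 - 1)"
    using assms harm_mono[of "D - z0 + 1" D, where 'a = real] by (intro mult_left_mono) (auto simp: harm_nonneg)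
  also have "\<dots> \<le> 2"
    using H0 harm_mono[of "z0 - 1" z0] by (simp add: field_simps)
  finally show ?thesis
    by simp
qed

lemma exists_harm_threshold:
  assumes "2 \<le> D"
  obtains z0 where "2 \<le> z0" "z0 \<le> D" "harm (D - 1) \<le> exp 1 * (harm (z0 - 1) :: real)"
    "(harm (z0 - 1) :: real) \<le> harm (D - 1) / exp 1 + 1"
proof -
  define n where "n = (LEAST n. harm (D - 1) \<le> exp 1 * (harm n :: real))"
  have "harm (D - 1) \<le> exp 1 * (harm (D - 1) :: real)"
    using mult_right_mono[of 1 "exp 1" "harm (D - 1) :: real"] by (simp add: harm_nonneg)
  then have n: "harm (D - 1) \<le> exp 1 * (harm n :: real)" "n \<le> D - 1"
    unfolding n_def by (auto intro: LeastI Least_le)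
  have "n \<noteq> 0"
  proof
    assume "n = 0"
    then have "harm (D - 1) \<le> (0 :: real)"
      using n(1) by (simp add: harm_def)
    then show False
      using assms harm_pos[of "D - 1", where 'a = real] by linarith
  qed
  then obtain m where m: "n = Suc m"
    using not0_implies_Suc by blast
  then have "\<not> harm (D - 1) \<le> exp 1 * (harm m :: real)"
    unfolding n_def by (intro not_less_Least) (simp add: m n_def)
  then have "(harm m :: real) < harm (D - 1) / exp 1"
    by (simp add: field_simps)
  moreover have "harm n \<le> harm m + (1 :: real)"
    by (simp add: m harm_Suc_divide)
  ultimately show ?thesis
    using n assms m by (intro that[of "Suc n"]) auto
qed

lemma exists_weights_small_residual:
  assumes "2 \<le> D"
  obtains l where "\<forall>d. 0 \<le> l d" "(\<Sum>d<D. l d) \<le> 1"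
    "(\<Sum>z\<in>{1..D}. max 0 (residual l z)) \<le> harm D / exp 1 + 3"
proof -
  obtain z0 where z0: "2 \<le> z0" "z0 \<le> D" "harm (D - 1) \<le> exp 1 * (harm (z0 - 1) :: real)"
    "(harm (z0 - 1) :: real) \<le> harm (D - 1) / exp 1 + 1"
    using exists_harm_threshold[OF assms] .
  have "harm (D - 1) / exp 1 \<le> (harm D :: real) / exp 1"
    by (intro divide_right_mono harm_mono) auto
  then have "(\<Sum>z\<in>{1..D}. max 0 (residual (harmonic_weight z0 D) z)) \<le> harm D / exp 1 + 3"
    using sum_residual_harmonic_weight_le[OF z0(1,2)] z0(4) by linarith
  moreover have "\<forall>d. 0 \<le> harmonic_weight z0 D d"
    by (simp add: harmonic_weight_def harm_nonneg)
  ultimately show ?thesis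
    using sum_harmonic_weight_le_1[OF z0(1-3)] that by blast
qed

definition window_value :: "nat \<Rightarrow> nat \<Rightarrow> nat \<Rightarrow> real" where
  "window_value D a t = (if a \<le> t \<and> t < a + D then 1 / real (a + D - t) else 0)"

lemma window_value_nonneg: "0 \<le> window_value D a t"
  by (simp add: window_value_def)

lemma window_value_le_1: "window_value D a t \<le> 1"
  by (simp add: window_value_def divide_le_eq)

lemma window_value_antimono:
  assumes "a \<le> a'" "t < a + D"
  shows "window_value D a' t \<le> window_value D a t"
  using assms by (auto simp: window_value_def frac_le)

lemma sum_window_reindex:
  fixes f :: "nat \<Rightarrow> real"
  assumes "a + D \<le> T"
  shows "(\<Sum>t<T. if a \<le> t \<and> t < a + D then f t else 0) = (\<Sum>z\<in>{1..D}. f (a + D - z))"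
proof -
  have "(\<Sum>t<T. if a \<le> t \<and> t < a + D then f t else 0) = (\<Sum>t\<in>{a..<a + D}. f t)"
    using assms by (intro sum.mono_neutral_cong_right) auto
  also have "\<dots> = (\<Sum>z\<in>{1..D}. f (a + D - z))"
    by (rule sum.reindex_bij_witness[of _ "\<lambda>z. a + D - z" "\<lambda>t. a + D - t"]) auto
  finally show ?thesis .
qed

lemma sum_window_value: "a + D \<le> T \<Longrightarrow> (\<Sum>t<T. window_value D a t) = harm D"
  using sum_window_reindex[of a D T "\<lambda>t. 1 / real (a + D - t)"]
  by (simp add: window_value_def harm_def inverse_eq_divide)

lemma sum_lessThan_shift:
  fixes f :: "nat \<Rightarrow> real"
  shows "(\<Sum>a<K. if a + d < K then f (a + d) else 0) = (\<Sum>a<K. if d \<le> a then f a else 0)"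
proof -
  have "(\<Sum>a<K. if a + d < K then f (a + d) else 0) = (\<Sum>a\<in>{a. a + d < K}. f (a + d))"
    by (intro sum.mono_neutral_cong_right) auto
  also have "\<dots> = (\<Sum>a\<in>{d..<K}. f a)"
    by (rule sum.reindex_bij_witness[of _ "\<lambda>a. a - d" "\<lambda>a. a + d"]) auto
  also have "\<dots> = (\<Sum>a<K. if d \<le> a then f a else 0)"
    by (intro sum.mono_neutral_cong_left) auto
  finally show ?thesis .
qed

locale window_types =
  fixes K D T :: nat and r x :: "nat \<Rightarrow> nat \<Rightarrow> real" and g :: "nat \<Rightarrow> real"
  assumes T_eq: "T = K + D"
    and alloc_nonneg: "\<And>a t. a < K \<Longrightarrow> t < T \<Longrightarrow> 0 \<le> r a t"
    and alloc_le_1: "\<And>a t. a < K \<Longrightarrow> t < T \<Longrightarrow> r a t \<le> 1"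
    and price_le_value: "\<And>a t. a < K \<Longrightarrow> t < T \<Longrightarrow> x a t \<le> r a t * window_value D a t"
    and misreport_unprofitable: "\<And>a a' \<tau>. a < K \<Longrightarrow> a' < K \<Longrightarrow> \<tau> < T \<Longrightarrow>
      (\<forall>t\<le>\<tau>. x a' t \<le> r a' t * window_value D a t) \<Longrightarrow>
      (\<Sum>t\<le>\<tau>. r a' t * window_value D a t - x a' t) + x a' \<tau>
        \<le> (\<Sum>t<T. r a t * window_value D a t - x a t) + g a"
begin

definition utility :: "nat \<Rightarrow> real" where
  "utility a = (\<Sum>t<T. r a t * window_value D a t - x a t) + g a"

definition welfare :: "nat \<Rightarrow> real" where
  "welfare a = (\<Sum>t<T. r a t * window_value D a t)"

text \<open>The value type \<open>a - d\<close> gains from the allocation of type \<open>a\<close>; \<open>z\<close> counts the rounds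
  left in the window of \<open>a\<close>.\<close>

definition gain :: "nat \<Rightarrow> nat \<Rightarrow> real" where
  "gain a d = (\<Sum>z\<in>{d<..D}. r a (a + D - z) * (1 / real (z - d) - 1 / real z))"

lemma utility_nonneg:
  assumes "a < K"
  shows "0 \<le> utility a"
proof -
  have T: "0 < T"
    using assms T_eq by simp
  have "0 \<le> r a 0 * window_value D a 0"
    using alloc_nonneg[OF assms T] by (simp add: window_value_nonneg)
  also have "\<dots> \<le> utility a"
    using misreport_unprofitable[OF assms assms T] price_le_value[OF assms T] by (simp add: utility_def)
  finally show ?thesis .
qed

lemma welfare_eq:
  assumes "a < K"
  shows "welfare a = (\<Sum>z\<in>{1..D}. r a (a + D - z) / real z)"
proof -
  have "welfare a = (\<Sum>t<T. if a \<le> t \<and> t < a + D then r a t / real (a + D - t) else 0)"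
    unfolding welfare_def window_value_def by (intro sum.cong) auto
  also have "\<dots> = (\<Sum>z\<in>{1..D}. r a (a + D - z) / real (a + D - (a + D - z)))"
    using assms T_eq by (intro sum_window_reindex) simp
  also have "\<dots> = (\<Sum>z\<in>{1..D}. r a (a + D - z) / real z)"
    by (intro sum.cong) auto
  finally show ?thesis .
qed

lemma welfare_le_harm:
  assumes "a < K"
  shows "welfare a \<le> harm D"
proof -
  have "welfare a \<le> (\<Sum>t<T. window_value D a t)"
    unfolding welfare_def using assms alloc_nonneg alloc_le_1
    by (intro sum_mono mult_left_le_one_le window_value_nonneg) auto
  also have "\<dots> = harm D"
    using assms T_eq by (intro sum_window_value) simp
  finally show ?thesis .
qed

lemma gain_nonneg: "a < K \<Longrightarrow> 0 \<le> gain a d"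
  unfolding gain_def using T_eq alloc_nonneg
  by (intro sum_nonneg mult_nonneg_nonneg) (auto simp: frac_le)

lemma gain_eq_sum_rounds:
  assumes "d \<le> a"
  shows "gain a d = (\<Sum>t\<in>{a..<a - d + D}. r a t * (window_value D (a - d) t - window_value D a t))"
  unfolding gain_def
  by (rule sum.reindex_bij_witness[of _ "\<lambda>t. a + D - t" "\<lambda>z. a + D - z"])
    (use assms in \<open>auto simp: window_value_def\<close>)

lemma gain_le_utility:
  assumes "d \<le> a" "a < K" "d < D"
  shows "gain a d \<le> utility (a - d)"
proof -
  define b where "b = a - d"
  \<comment> \<open>Type \<open>b\<close> reports \<open>a\<close> and stops paying after round \<open>\<tau>\<close>, the end of its own window.\<close>
  define \<tau> where "\<tau> = b + D - 1"
  have b: "b < K" "b \<le> a" and \<tau>: "\<tau> < T" "Suc \<tau> = b + D"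
    using assms T_eq by (auto simp: b_def \<tau>_def)
  have t_less: "t < T" if "t < b + D" for t
    using that \<tau> by simp
  have w_le: "window_value D a t \<le> window_value D b t" if "t < b + D" for t
    using that b by (intro window_value_antimono)
  have r_nonneg: "0 \<le> r a t" if "t < b + D" for t
    using alloc_nonneg[OF assms(2) t_less[OF that]] .
  have profit_nonneg: "0 \<le> r a t * window_value D a t - x a t" if "t < b + D" for t
    using price_le_value[OF assms(2) t_less[OF that]] by simp
  have "gain a d = (\<Sum>t\<in>{a..<b + D}. r a t * (window_value D b t - window_value D a t))"
    unfolding b_def using assms(1) by (rule gain_eq_sum_rounds)
  also have "\<dots> \<le> (\<Sum>t<b + D. r a t * (window_value D b t - window_value D a t))"
    using w_le r_nonneg by (intro sum_mono2) auto
  also have "\<dots> \<le> (\<Sum>t<b + D. r a t * window_value D b t - x a t) + x a \<tau>"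
  proof -
    have "0 \<le> (\<Sum>t<\<tau>. r a t * window_value D a t - x a t) + r a \<tau> * window_value D a \<tau>"
      using profit_nonneg r_nonneg \<tau>(2)
      by (intro add_nonneg_nonneg sum_nonneg mult_nonneg_nonneg window_value_nonneg) auto
    also have "\<dots> = (\<Sum>t<b + D. r a t * window_value D a t - x a t) + x a \<tau>"
      unfolding \<tau>(2)[symmetric] by simp
    moreover have "(\<Sum>t<b + D. r a t * window_value D b t - x a t)
        = (\<Sum>t<b + D. r a t * (window_value D b t - window_value D a t))
          + (\<Sum>t<b + D. r a t * window_value D a t - x a t)"
      by (simp add: sum.distrib[symmetric] algebra_simps)
    ultimately show ?thesis
      by linarith
  qed
  also have "\<dots> \<le> utility b"
  proof -
    have "\<forall>t\<le>\<tau>. x a t \<le> r a t * window_value D b t"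
      using price_le_value[OF assms(2) t_less] mult_left_mono[OF w_le r_nonneg] order_trans \<tau>(2)
      by (metis less_Suc_eq_le)
    then show ?thesis
      unfolding utility_def lessThan_Suc_atMost[symmetric] \<tau>(2)
      by (rule misreport_unprofitable[OF b(1) assms(2) \<tau>(1), unfolded lessThan_Suc_atMost[symmetric] \<tau>(2)])
  qed
  finally show ?thesis
    by (simp add: b_def)
qed

lemma weighted_gain_le_utility:
  assumes "\<forall>d. 0 \<le> l d" "(\<Sum>d<D. l d) \<le> 1" "a < K"
  shows "(\<Sum>d<D. l d * (if a + d < K then gain (a + d) d else 0)) \<le> utility a"
proof -
  have "gain (a + d) d \<le> utility a" if "a + d < K" "d < D" for d
    using gain_le_utility[of d "a + d"] that by simp
  then have "(\<Sum>d<D. l d * (if a + d < K then gain (a + d) d else 0)) \<le> (\<Sum>d<D. l d * utility a)"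
    using assms utility_nonneg[OF assms(3)] by (intro sum_mono mult_left_mono) auto
  also have "\<dots> \<le> utility a"
    using assms utility_nonneg[OF assms(3)]
    by (simp add: sum_distrib_right[symmetric] mult_left_le_one_le sum_nonneg)
  finally show ?thesis .
qed

lemma sum_gains_le_sum_utility:
  assumes "\<forall>d. 0 \<le> l d" "(\<Sum>d<D. l d) \<le> 1"
  shows "(\<Sum>a<K. \<Sum>d<D. l d * (if d \<le> a then gain a d else 0)) \<le> (\<Sum>a<K. utility a)"
proof -
  have "(\<Sum>a<K. \<Sum>d<D. l d * (if d \<le> a then gain a d else 0))
      = (\<Sum>d<D. l d * (\<Sum>a<K. if d \<le> a then gain a d else 0))"
    by (subst sum.swap) (simp add: sum_distrib_left)
  also have "\<dots> = (\<Sum>d<D. l d * (\<Sum>a<K. if a + d < K then gain (a + d) d else 0))"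
    by (rule sum.cong[OF refl]) (subst sum_lessThan_shift, rule refl)
  also have "\<dots> = (\<Sum>a<K. \<Sum>d<D. l d * (if a + d < K then gain (a + d) d else 0))"
    by (subst sum.swap) (simp add: sum_distrib_left)
  also have "\<dots> \<le> (\<Sum>a<K. utility a)"
    using assms by (intro sum_mono weighted_gain_le_utility) auto
  finally show ?thesis .
qed

lemma welfare_minus_gains_le:
  assumes "a < K"
  shows "welfare a - (\<Sum>d<D. l d * gain a d) \<le> (\<Sum>z\<in>{1..D}. max 0 (residual l z))"
proof -
  let ?c = "\<lambda>d z. 1 / real (z - d) - 1 / real z"
  have r: "0 \<le> r a (a + D - z)" "r a (a + D - z) \<le> 1" if "z \<in> {1..D}" for z
    using that assms T_eq alloc_nonneg alloc_le_1 by auto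
  have "(\<Sum>d<D. l d * gain a d) = (\<Sum>d<D. \<Sum>z\<in>{z\<in>{1..D}. d < z}. l d * (r a (a + D - z) * ?c d z))"
    unfolding gain_def sum_distrib_left by (intro sum.cong) auto
  also have "\<dots> = (\<Sum>z\<in>{1..D}. \<Sum>d\<in>{d\<in>{..<D}. d < z}. l d * (r a (a + D - z) * ?c d z))"
    by (rule sum.swap_restrict) auto
  also have "\<dots> = (\<Sum>z\<in>{1..D}. r a (a + D - z) * (\<Sum>d<z. l d * ?c d z))"
    unfolding sum_distrib_left by (intro sum.cong) (auto simp: mult_ac)
  finally have "welfare a - (\<Sum>d<D. l d * gain a d) = (\<Sum>z\<in>{1..D}. r a (a + D - z) * residual l z)"
    using assms by (simp add: welfare_eq residual_def sum_subtractf[symmetric] algebra_simps)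
  also have "\<dots> \<le> (\<Sum>z\<in>{1..D}. max 0 (residual l z))"
  proof (intro sum_mono)
    fix z assume z: "z \<in> {1..D}"
    have "r a (a + D - z) * residual l z \<le> r a (a + D - z) * max 0 (residual l z)"
      using r[OF z] by (intro mult_left_mono) auto
    also have "\<dots> \<le> max 0 (residual l z)"
      using r[OF z] by (intro mult_left_le_one_le) auto
    finally show "r a (a + D - z) * residual l z \<le> max 0 (residual l z)" .
  qed
  finally show ?thesis .
qed

lemma sum_revenue_le:
  assumes "\<forall>d. 0 \<le> l d" "(\<Sum>d<D. l d) \<le> 1"
  shows "(\<Sum>a<K. (\<Sum>t<T. x a t) - g a) \<le> real D * harm D + real K * (\<Sum>z\<in>{1..D}. max 0 (residual l z))"
proof -
  define S where "S = (\<Sum>z\<in>{1..D}. max 0 (residual l z))"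
  have S: "0 \<le> S"
    by (simp add: S_def sum_nonneg)
  have "welfare a - (\<Sum>d<D. l d * (if d \<le> a then gain a d else 0)) \<le> S + (if a < D then harm D else 0)"
    if a: "a < K" for a
  proof (cases "D \<le> a + 1")
    case True
    then show ?thesis
      using welfare_minus_gains_le[OF a, of l] S harm_nonneg[of D, where 'a = real] by (auto simp: S_def)
  next
    case False
    have "0 \<le> (\<Sum>d<D. l d * (if d \<le> a then gain a d else 0))"
      using assms gain_nonneg[OF a] by (intro sum_nonneg mult_nonneg_nonneg) auto
    then show ?thesis
      using False S welfare_le_harm[OF a] by simp
  qed
  then have "(\<Sum>a<K. welfare a) - (\<Sum>a<K. \<Sum>d<D. l d * (if d \<le> a then gain a d else 0))
      \<le> (\<Sum>a<K. S + (if a < D then harm D else 0))"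
    unfolding sum_subtractf[symmetric] by (intro sum_mono) auto
  moreover have "(\<Sum>a<K. if a < D then harm D else 0) \<le> (\<Sum>a<D. harm D :: real)"
    using harm_nonneg[of D, where 'a = real]
    by (simp add: sum.If_cases del: sum_constant) (intro sum_mono2, auto)
  ultimately have "(\<Sum>a<K. welfare a) - (\<Sum>a<K. utility a) \<le> real K * S + real D * harm D"
    using sum_gains_le_sum_utility[OF assms] by (simp add: sum.distrib)
  then show ?thesis
    by (simp add: S_def welfare_def utility_def sum_subtractf sum.distrib)
qed

end

definition bidder_revenue ::
  "nat \<Rightarrow> (profile \<Rightarrow> nat \<Rightarrow> nat \<Rightarrow> real) \<Rightarrow> (profile \<Rightarrow> nat \<Rightarrow> real) \<Rightarrow> profile \<Rightarrow> nat \<Rightarrow> real" where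
  "bidder_revenue T x g v i = (\<Sum>t<T. x v i t) - g v i"

lemma revenue_eq_sum_bidder_revenue: "revenue k T x g v = (\<Sum>i<k. bidder_revenue T x g v i)"
  by (simp add: revenue_def bidder_revenue_def sum_subtractf)

lemma truthful_price_le_value:
  "truthful k T r x g \<Longrightarrow> valid_profile k T v \<Longrightarrow> i < k \<Longrightarrow> t < T \<Longrightarrow> x v i t \<le> r v i t * v i t"
  unfolding truthful_def by blast

lemma truthful_misreport_unprofitable:
  "truthful k T r x g \<Longrightarrow> valid_profile k T v \<Longrightarrow> valid_profile k T v' \<Longrightarrow> i < k \<Longrightarrow>
    differ_only_in i v v' \<Longrightarrow> \<tau> < T \<Longrightarrow> (\<forall>t\<le>\<tau>. x v' i t \<le> r v' i t * v i t) \<Longrightarrow>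
    (\<Sum>t\<le>\<tau>. r v' i t * v i t - x v' i t) + x v' i \<tau> \<le> (\<Sum>t<T. r v i t * v i t - x v i t) + g v i"
  unfolding truthful_def by blast

lemma bidder_revenue_nonpos_of_zero_values:
  assumes "truthful k T r x g" "valid_profile k T v" "i < k" "0 < T" "\<And>t. v i t = 0"
  shows "bidder_revenue T x g v i \<le> 0"
proof -
  have "(\<Sum>t\<le>0. r v i t * v i t - x v i t) + x v i 0 \<le> (\<Sum>t<T. r v i t * v i t - x v i t) + g v i"
    using assms(1-4) truthful_price_le_value[OF assms(1,2,3)]
    by (intro truthful_misreport_unprofitable) (auto simp: differ_only_in_def)
  then show ?thesis
    using assms(5) by (simp add: bidder_revenue_def sum_negf)
qed

lemma sum_bidder_revenue_window_types_le:
  assumes "feasible_mech k T r" "truthful k T r x g" "i < k" "T = K + D"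
    and valid: "\<And>a. a < K \<Longrightarrow> valid_profile k T (v a)"
    and differ: "\<And>a a'. a < K \<Longrightarrow> a' < K \<Longrightarrow> differ_only_in i (v a) (v a')"
    and type_values: "\<And>a. a < K \<Longrightarrow> v a i = window_value D a"
    and "\<forall>d. 0 \<le> l d" "(\<Sum>d<D. l d) \<le> 1"
  shows "(\<Sum>a<K. bidder_revenue T x g (v a) i)
    \<le> real D * harm D + real K * (\<Sum>z\<in>{1..D}. max 0 (residual l z))"
proof -
  interpret window_types K D T "\<lambda>a. r (v a) i" "\<lambda>a. x (v a) i" "\<lambda>a. g (v a) i"
  proof
    fix a t assume a: "a < K" and t: "t < T"
    then show "0 \<le> r (v a) i t" "r (v a) i t \<le> 1"
      using assms(1,3) valid[OF a] unfolding feasible_mech_def by auto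
    show "x (v a) i t \<le> r (v a) i t * window_value D a t"
      using truthful_price_le_value[OF assms(2) valid[OF a] assms(3) t] type_values[OF a] by simp
  next
    fix a a' \<tau> assume a: "a < K" "a' < K" and \<tau>: "\<tau> < T"
      and "\<forall>t\<le>\<tau>. x (v a') i t \<le> r (v a') i t * window_value D a t"
    then show "(\<Sum>t\<le>\<tau>. r (v a') i t * window_value D a t - x (v a') i t) + x (v a') i \<tau>
        \<le> (\<Sum>t<T. r (v a) i t * window_value D a t - x (v a) i t) + g (v a) i"
      using truthful_misreport_unprofitable[OF assms(2) valid[OF a(1)] valid[OF a(2)] assms(3) differ[OF a] \<tau>]
      by (simp add: type_values[OF a(1)])
  qed (rule assms(4))
  show ?thesis
    using sum_revenue_le[OF assms(8,9)] by (simp add: bidder_revenue_def)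
qed

definition window_profile :: "nat \<Rightarrow> nat \<Rightarrow> nat \<Rightarrow> profile" where
  "window_profile D a c i = (if i = 0 then window_value D a else if i = 1 then window_value D c else (\<lambda>t. 0))"

lemma valid_window_profile:
  assumes "2 \<le> k" "a + D \<le> T" "c + D \<le> T"
  shows "valid_profile k T (window_profile D a c)"
  using assms window_value_nonneg window_value_le_1
  by (auto simp: valid_profile_def window_profile_def window_value_def)

lemma rev_STB_window_profile:
  assumes "2 \<le> k" "a + D \<le> T" "c + D \<le> T"
  shows "rev_STB k T (window_profile D a c) = harm D"
proof -
  have "map (total_value T (window_profile D a c)) [0..<k] = harm D # harm D # replicate (k - 2) 0"
    by (rule nth_equalityI)
      (use assms in \<open>auto simp: total_value_def window_profile_def sum_window_value nth_Cons'\<close>)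
  moreover have "sort (harm D # harm D # replicate (k - 2) 0) = replicate (k - 2) 0 @ [harm D, harm D :: real]"
    by (rule properties_for_sort) (auto simp: harm_nonneg sorted_append)
  ultimately show ?thesis
    by (simp add: rev_STB_def nth_append)
qed

lemma revenue_window_profile_le:
  assumes "truthful k T r x g" "2 \<le> k" "0 < T" "valid_profile k T (window_profile D a c)"
  shows "revenue k T x g (window_profile D a c)
    \<le> bidder_revenue T x g (window_profile D a c) 0 + bidder_revenue T x g (window_profile D a c) 1"
proof -
  let ?b = "bidder_revenue T x g (window_profile D a c)"
  have "{..<k} = {0, 1} \<union> {2..<k}"
    using assms(2) by auto
  then have "revenue k T x g (window_profile D a c) = ?b 0 + ?b 1 + (\<Sum>i\<in>{2..<k}. ?b i)"
    by (simp add: revenue_eq_sum_bidder_revenue sum.union_disjoint)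
  moreover have "(\<Sum>i\<in>{2..<k}. ?b i) \<le> 0"
    using assms by (intro sum_nonpos bidder_revenue_nonpos_of_zero_values) (auto simp: window_profile_def)
  ultimately show ?thesis
    by simp
qed

lemma sum_revenue_window_profiles_le:
  assumes "feasible_mech k T r" "truthful k T r x g" "2 \<le> k" "T = K + D"
    and "\<forall>d. 0 \<le> l d" "(\<Sum>d<D. l d) \<le> 1"
  shows "(\<Sum>a<K. \<Sum>c<K. revenue k T x g (window_profile D a c))
    \<le> 2 * real K * (real D * harm D + real K * (\<Sum>z\<in>{1..D}. max 0 (residual l z)))"
proof -
  define B where "B = real D * harm D + real K * (\<Sum>z\<in>{1..D}. max 0 (residual l z))"
  define b where "b a c i = bidder_revenue T x g (window_profile D a c) i" for a c i
  have valid: "valid_profile k T (window_profile D a c)" if "a < K" "c < K" for a c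
    using that assms(3,4) by (intro valid_window_profile) auto
  have bidder_0: "(\<Sum>a<K. b a c 0) \<le> B" if "c < K" for c
    unfolding B_def b_def using assms(3) valid[OF _ that]
    by (intro sum_bidder_revenue_window_types_le[OF assms(1,2) _ assms(4) _ _ _ assms(5,6)])
      (auto simp: differ_only_in_def window_profile_def)
  have bidder_1: "(\<Sum>c<K. b a c 1) \<le> B" if "a < K" for a
    unfolding B_def b_def using assms(3) valid[OF that]
    by (intro sum_bidder_revenue_window_types_le[OF assms(1,2) _ assms(4) _ _ _ assms(5,6)])
      (auto simp: differ_only_in_def window_profile_def)
  have "(\<Sum>a<K. \<Sum>c<K. revenue k T x g (window_profile D a c)) \<le> (\<Sum>a<K. \<Sum>c<K. b a c 0 + b a c 1)"
    unfolding b_def using assms(2-4) valid by (intro sum_mono revenue_window_profile_le) auto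
  also have "\<dots> = (\<Sum>c<K. \<Sum>a<K. b a c 0) + (\<Sum>a<K. \<Sum>c<K. b a c 1)"
    by (simp only: sum.distrib sum.swap[of "\<lambda>a c. b a c 0"])
  also have "\<dots> \<le> (\<Sum>c<K. B) + (\<Sum>a<K. B)"
    using bidder_0 bidder_1 by (intro add_mono sum_mono) auto
  finally show ?thesis
    by (simp add: B_def)
qed

lemma exists_window_profile_low_revenue:
  assumes "feasible_mech k T r" "truthful k T r x g" "2 \<le> k" "2 \<le> D" "0 < m" "T = m * D + D"
  obtains v where "valid_profile k T v" "rev_STB k T v = harm D"
    "revenue k T x g v \<le> (2 / real m + 2 / exp 1) * harm D + 6"
proof -
  define K where "K = m * D"
  define bound where "bound = (2 / real m + 2 / exp 1) * harm D + 6"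
  obtain l where l: "\<forall>d. 0 \<le> l d" "(\<Sum>d<D. l d) \<le> 1"
    "(\<Sum>z\<in>{1..D}. max 0 (residual l z)) \<le> harm D / exp 1 + 3"
    using exists_weights_small_residual[OF assms(4)] .
  have K: "0 < K" "T = K + D"
    using assms by (auto simp: K_def)
  have "(\<Sum>a<K. \<Sum>c<K. revenue k T x g (window_profile D a c))
      \<le> 2 * real K * (real D * harm D + real K * (\<Sum>z\<in>{1..D}. max 0 (residual l z)))"
    using assms(1-3) K(2) l(1,2) by (rule sum_revenue_window_profiles_le)
  also have "\<dots> \<le> 2 * real K * (real D * harm D + real K * (harm D / exp 1 + 3))"
    using l(3) by (intro mult_left_mono add_left_mono) auto
  also have "\<dots> = (\<Sum>a<K. \<Sum>c<K. bound)"
    using assms(5) by (simp add: bound_def K_def field_simps)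
  finally have sum_le: "(\<Sum>a<K. \<Sum>c<K. revenue k T x g (window_profile D a c)) \<le> (\<Sum>a<K. \<Sum>c<K. bound)" .
  have "\<exists>a<K. \<exists>c<K. revenue k T x g (window_profile D a c) \<le> bound"
  proof (rule ccontr)
    assume "\<not> ?thesis"
    then have "(\<Sum>a<K. \<Sum>c<K. bound) < (\<Sum>a<K. \<Sum>c<K. revenue k T x g (window_profile D a c))"
      using K(1) by (intro sum_strict_mono) (auto simp: not_le)
    with sum_le show False
      by simp
  qed
  then obtain a c where ac: "a < K" "c < K" "revenue k T x g (window_profile D a c) \<le> bound"
    by blast
  show ?thesis
  proof (rule that)
    show "valid_profile k T (window_profile D a c)"
      using ac K assms by (intro valid_window_profile) auto
    show "rev_STB k T (window_profile D a c) = harm D"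
      using ac K assms by (intro rev_STB_window_profile) auto
  qed (use ac in \<open>simp add: bound_def\<close>)
qed

lemma exists_harm_gt: obtains D where "2 \<le> D" "y < (harm D :: real)"
proof -
  have "eventually (\<lambda>n. y < harm n) sequentially"
    using harm_at_top by (simp add: filterlim_at_top_dense)
  moreover have "eventually (\<lambda>n. 2 \<le> n) sequentially"
    by (rule eventually_ge_at_top)
  ultimately have "eventually (\<lambda>n. y < harm n \<and> 2 \<le> n) sequentially"
    by (rule eventually_conj)
  then show ?thesis
    using that by (auto simp: eventually_sequentially)
qed

theorem corollary11:
  fixes k :: nat and \<alpha> :: real
  assumes "k \<ge> 2" and "\<alpha> > 2 / exp 1"
  shows "\<not> (\<exists>R X G. (\<forall>T. feasible_mech k T (R T) \<and> truthful k T (R T) (X T) (G T))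
                  \<and> competitive k \<alpha> R X G)"
proof
  assume "\<exists>R X G. (\<forall>T. feasible_mech k T (R T) \<and> truthful k T (R T) (X T) (G T)) \<and> competitive k \<alpha> R X G"
  then obtain R X G C where mech: "\<And>T. feasible_mech k T (R T)" "\<And>T. truthful k T (R T) (X T) (G T)"
    and competitive: "\<And>T v. valid_profile k T v \<Longrightarrow> \<alpha> * rev_STB k T v - C \<le> revenue k T (X T) (G T) v"
    unfolding competitive_def by blast
  define \<delta> where "\<delta> = \<alpha> - 2 / exp 1"
  have \<delta>: "0 < \<delta>"
    using assms(2) by (simp add: \<delta>_def)
  obtain m :: nat where m: "4 / \<delta> < real m"
    using reals_Archimedean2 by blast
  have m_pos: "0 < m"
    using m \<delta> by (metis divide_pos_pos of_nat_0_less_iff order.strict_trans zero_less_numeral)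
  have "4 < \<delta> * real m"
    using m \<delta> by (simp add: field_simps)
  then have m_large: "2 / real m \<le> \<delta> / 2"
    using m_pos by (simp add: field_simps)
  obtain D where D: "2 \<le> D" "2 * (\<bar>C\<bar> + 6) / \<delta> < harm D"
    using exists_harm_gt .
  obtain v where "valid_profile k (m * D + D) v" "rev_STB k (m * D + D) v = harm D"
    "revenue k (m * D + D) (X (m * D + D)) (G (m * D + D)) v \<le> (2 / real m + 2 / exp 1) * harm D + 6"
    using exists_window_profile_low_revenue[OF mech assms(1) D(1) m_pos refl] .
  then have "(\<delta> - 2 / real m) * harm D \<le> C + 6"
    using competitive by (force simp: \<delta>_def algebra_simps)
  moreover have "\<delta> / 2 * harm D \<le> (\<delta> - 2 / real m) * harm D"
    using m_large by (intro mult_right_mono) (auto simp: harm_nonneg)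
  moreover have "\<bar>C\<bar> + 6 < \<delta> / 2 * harm D"
    using D(2) \<delta> by (simp add: field_simps)
  ultimately show False
    by linarith
qed

end
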